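(* Let $B \ge 1$ and let $|B| \ge 2$ be an even integer. Consider the busNNN architecture with $B$ buses, each attached to $|B|$ qubits, described in the context, with its $2B$ columns $0,1,\dots,2B-1$. Apply the following alternating sequence of swap layers, starting from the initial placement (time $0$): layer type $\mathcal{S}_0$, then $\mathcal{S}_1$, then $\mathcal{S}_0$, then $\mathcal{S}_1$, and so on, where - $\mathcal{S}_0$ (inter-bus layer) swaps, position-wise, the contents of column $2i+1$ with the contents of column $2i+2$ for every $i = 0,\dots,B-2$ (i.e. it swaps the qubit states across every point-to-point inter-bus edge); - $\mathcal{S}_1$ (intra-bus layer) swaps, position-wise, the contents of column $2i$ with the contents of column $2i+1$ for every $i = 0,\dots,B-2$ (i.e. on every bus except the last, $(B-1)$-th, bus). Say that full connectivity is reached after $L$ layers if for every pair of distinct logical qubits there is a time $t \in \{0,1,\dots,L\}$ (time $t$ being the placement after the first $t$ layers) at which the two qubits sit on qubit positions attached to a common bus. Then the smallest $L$ for which full connectivity is reached is exactly $$(4B-5)\left\lceil \frac{B}{B+1} \right\rceil,$$ i.e. $0$ if $B=1$ and $4B-5$ if $B \ge 2$.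
   Context: The busNNN ("bus next-nearest neighbor") architecture with $B$ buses and bus size $|B|$ (an even integer) has $n = B|B|$ physical qubit positions. A bus is a hardware element attached to $|B|$ qubit positions that can apply a two-qubit gate between any two of the qubit positions attached to it. The $|B|$ positions attached to bus $i$ ($i = 0,\dots,B-1$) are split into two "columns" (half-buses) of $|B|/2$ positions each, labeled column $2i$ and column $2i+1$; within each column the positions are indexed $k = 0,\dots,|B|/2-1$. Adjacent buses are connected by point-to-point edges: for each $i = 0,\dots,B-2$ and each $k$, position $k$ of column $2i+1$ is coupled to position $k$ of column $2i+2$. A swap layer is a set of simultaneous SWAP operations on disjoint pairs of positions; "swapping column $a$ with column $b$ position-wise" means swapping, for every $k$, the state at position $k$ of column $a$ with the state at position $k$ of column $b$. Logical qubits are initially placed one per position. *)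

theory Defs
  imports Complex_Main
begin

text \<open>A qubit position is a pair (column, index within column).
  Column c belongs to bus c div 2. Bus size s = |B|, so each column has s div 2 positions.\<close>

type_synonym pos = "nat \<times> nat"

definition positions :: "nat \<Rightarrow> nat \<Rightarrow> pos set" where
  "positions B s = {(c, k). c < 2 * B \<and> k < s div 2}"

definition bus_of :: "pos \<Rightarrow> nat" where
  "bus_of p = fst p div 2"

definition S0 :: "nat \<Rightarrow> pos \<Rightarrow> pos" where
  "S0 B p = (case p of (c, k) \<Rightarrow>
     if (\<exists>i. i + 2 \<le> B \<and> c = 2 * i + 1) then (c + 1, k)
     else if (\<exists>i. i + 2 \<le> B \<and> c = 2 * i + 2) then (c - 1, k)
     else (c, k))"

definition S1 :: "nat \<Rightarrow> pos \<Rightarrow> pos" where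
  "S1 B p = (case p of (c, k) \<Rightarrow>
     if (\<exists>i. i + 2 \<le> B \<and> c = 2 * i) then (c + 1, k)
     else if (\<exists>i. i + 2 \<le> B \<and> c = 2 * i + 1) then (c - 1, k)
     else (c, k))"

definition layer :: "nat \<Rightarrow> nat \<Rightarrow> pos \<Rightarrow> pos" where
  "layer B t = (if even t then S0 B else S1 B)"

text \<open>placement B t p = the logical qubit at position p after the first t layers.
  Logical qubits are labelled by their initial position.\<close>
fun placement :: "nat \<Rightarrow> nat \<Rightarrow> pos \<Rightarrow> pos" where
  "placement B 0 = id"
| "placement B (Suc t) = placement B t \<circ> layer B t"

definition share_bus_at :: "nat \<Rightarrow> nat \<Rightarrow> nat \<Rightarrow> pos \<Rightarrow> pos \<Rightarrow> bool" where
  "share_bus_at B s t q1 q2 =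
     (\<exists>p1\<in>positions B s. \<exists>p2\<in>positions B s.
        placement B t p1 = q1 \<and> placement B t p2 = q2 \<and> bus_of p1 = bus_of p2)"

definition full_connectivity :: "nat \<Rightarrow> nat \<Rightarrow> nat \<Rightarrow> bool" where
  "full_connectivity B s L =
     (\<forall>q1\<in>positions B s. \<forall>q2\<in>positions B s. q1 \<noteq> q2 \<longrightarrow>
        (\<exists>t\<le>L. share_bus_at B s t q1 q2))"

end

theory Submission
  imports Defs
begin

text \<open>Columns \<open>0, \<dots>, 2B-2\<close> form one closed track of length \<open>4B-2\<close>: every layer moves each
  qubit on them one step along the track, while column \<open>2B-1\<close> is never touched. Two qubits on
  the track therefore keep their distance along it, and they share a bus whenever they occupy
  mirror-image track positions; a suitable mirror pair is reached by any two of them within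
  \<open>4B-5\<close> layers, and every track qubit visits the last bus within that time. Conversely the
  qubit starting in column \<open>2B-4\<close> first reaches the last bus, and so meets the qubits of
  column \<open>2B-1\<close>, after exactly \<open>4B-5\<close> layers.\<close>

lemma S0_eq:
  "S0 B (c, k) = ((if odd c \<and> c + 3 \<le> 2*B then c + 1
                  else if even c \<and> 2 \<le> c \<and> c + 2 \<le> 2*B then c - 1 else c), k)"
  unfolding S0_def by (auto; presburger)

lemma S1_eq:
  "S1 B (c, k) = ((if even c \<and> c + 4 \<le> 2*B then c + 1
                  else if odd c \<and> c + 3 \<le> 2*B then c - 1 else c), k)"
  unfolding S1_def by (auto; presburger)

lemma layer_layer [simp]: "layer B t (layer B t p) = p"
  by (cases p) (auto simp: layer_def S0_eq S1_eq; presburger)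

lemma inj_placement: "inj (placement B t)"
proof (induction t)
  case (Suc t)
  have "inj (layer B t)"
    by (metis injI layer_layer)
  with Suc show ?case
    using inj_compose by (metis placement.simps(2))
qed simp

text \<open>Track position \<open>v < 2B-1\<close> is column \<open>v\<close> traversed rightwards, and \<open>v \<ge> 2B-1\<close> is
  column \<open>4B-3-v\<close> traversed leftwards. \<open>column_at B c t\<close> is the column holding, after \<open>t\<close>
  layers, the qubits that started in column \<open>c\<close>.\<close>

definition track_col :: "nat \<Rightarrow> nat \<Rightarrow> nat" where
  "track_col B v = (if v < 2*B - 1 then v else 4*B - 3 - v)"

definition track_start :: "nat \<Rightarrow> nat \<Rightarrow> nat" where
  "track_start B c = (if odd c then c else 4*B - 3 - c)"

definition column_at :: "nat \<Rightarrow> nat \<Rightarrow> nat \<Rightarrow> nat" where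
  "column_at B c t =
     (if c < 2*B - 1 then track_col B ((track_start B c + t) mod (4*B - 2)) else c)"

lemma layer_track_col:
  assumes "B \<ge> 1" "v < 4*B - 2" "odd (v + t)"
  shows "layer B t (track_col B v, k) = (track_col B (Suc v mod (4*B - 2)), k)"
proof -
  have "Suc v mod (4*B - 2) = (if Suc v = 4*B - 2 then 0 else Suc v)"
    using assms(2) by auto
  then show ?thesis
    using assms unfolding layer_def track_col_def
    by (cases "even t") (auto simp: S0_eq S1_eq; presburger)+
qed

lemma track_start_odd: "c < 2*B - 1 \<Longrightarrow> odd (track_start B c) \<and> track_start B c < 4*B - 2"
  unfolding track_start_def by (auto; presburger)

lemma track_start_inj:
  "c < 2*B - 1 \<Longrightarrow> c' < 2*B - 1 \<Longrightarrow> track_start B c = track_start B c' \<Longrightarrow> c = c'"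
  unfolding track_start_def by (cases "odd c"; cases "odd c'") auto

lemma layer_column_at: "layer B t (column_at B c t, k) = (column_at B c (Suc t), k)"
proof (cases "c < 2*B - 1")
  case True
  define v where "v = (track_start B c + t) mod (4*B - 2)"
  have "odd (track_start B c)"
    using True track_start_odd by blast
  moreover have "even (4*B - 2)"
    by simp
  ultimately have "odd (v + t)"
    unfolding v_def by (simp add: dvd_mod_iff)
  moreover have "B \<ge> 1" "v < 4*B - 2"
    using True by (auto simp: v_def)
  ultimately show ?thesis
    using True layer_track_col[of B v t k]
    by (simp add: column_at_def v_def mod_Suc_eq)
next
  case False
  then show ?thesis
    by (auto simp: column_at_def layer_def S0_eq S1_eq)
qed

lemma placement_column_at: "placement B t (column_at B c t, k) = (c, k)"
proof (induction t)
  case 0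
  have "(track_start B c) mod (4*B - 2) = track_start B c" if "c < 2*B - 1"
    using that track_start_odd by auto
  then show ?case
    by (auto simp: column_at_def track_col_def track_start_def; presburger)
next
  case (Suc t)
  then show ?case
    by (metis comp_apply layer_column_at layer_layer placement.simps(2))
qed

lemma column_at_less: "c < 2*B \<Longrightarrow> column_at B c t < 2*B"
  by (auto simp: column_at_def track_col_def)

lemma share_bus_at_iff_column_at:
  assumes "(c, k) \<in> positions B s" "(c', k') \<in> positions B s"
  shows "share_bus_at B s t (c, k) (c', k') \<longleftrightarrow> column_at B c t div 2 = column_at B c' t div 2"
proof -
  have "placement B t p = (c, k) \<longleftrightarrow> p = (column_at B c t, k)" for c k p
    using inj_placement[of B t] placement_column_at[of B t c k] by (metis injD)
  moreover have "(column_at B c t, k) \<in> positions B s" "(column_at B c' t, k') \<in> positions B s"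
    using assms column_at_less by (auto simp: positions_def)
  ultimately show ?thesis
    by (auto simp: share_bus_at_def bus_of_def)
qed

lemma track_col_last_bus_iff:
  "B \<ge> 1 \<Longrightarrow> v < 4*B - 2 \<Longrightarrow> track_col B v div 2 = B - 1 \<longleftrightarrow> v = 2*B - 2 \<or> v = 2*B - 1"
  unfolding track_col_def by (cases "v < 2*B - 1") (simp_all, arith+)

lemma track_col_mirror:
  assumes "even v \<and> v + w = 4*B - 4 \<or> odd v \<and> v + w = 4*B - 2"
  shows "track_col B v div 2 = track_col B w div 2"
proof -
  obtain j where "v = 2*j \<and> v + w = 4*B - 4 \<or> v = 2*j + 1 \<and> v + w = 4*B - 2"
    using assms by (metis evenE oddE)
  then have "\<exists>a. track_col B v \<in> {2*a, 2*a + 1} \<and> track_col B w \<in> {2*a, 2*a + 1}"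
    unfolding track_col_def
    by (cases "j < B") (rule exI[of _ "if j < B then j else 2*B - 2 - j"]; auto)+
  then show ?thesis
    by auto
qed

lemma track_reaches_last_bus:
  assumes "B \<ge> 2" "odd u" "u < 4*B - 2"
  shows "\<exists>t\<le>4*B - 5. track_col B ((u + t) mod (4*B - 2)) div 2 = B - 1"
proof -
  obtain t where t: "t \<le> 4*B - 5" "(u + t) mod (4*B - 2) \<in> {2*B - 2, 2*B - 1}"
  proof (cases "u \<le> 2*B - 1")
    case True
    then have "(u + (2*B - 1 - u)) mod (4*B - 2) = 2*B - 1"
      using assms by simp
    moreover have "2*B - 1 - u \<le> 4*B - 5"
      using assms by arith
    ultimately show ?thesis
      using that by blast
  next
    case False
    moreover have "u \<noteq> 2*B"
      using assms(2) by auto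
    ultimately have "u \<ge> 2*B + 1"
      by linarith
    then have "u + (6*B - 4 - u) = (2*B - 2) + (4*B - 2)" "2*B - 2 < 4*B - 2"
      and bound: "6*B - 4 - u \<le> 4*B - 5"
      using assms by linarith+
    then have "(u + (6*B - 4 - u)) mod (4*B - 2) = 2*B - 2"
      by (metis mod_add_self2 mod_less)
    then show ?thesis
      using that bound by blast
  qed
  moreover have "(u + t) mod (4*B - 2) < 4*B - 2"
    using assms by simp
  ultimately show ?thesis
    using assms track_col_last_bus_iff[of B "(u + t) mod (4*B - 2)"] by auto
qed

lemma track_avoids_last_bus:
  assumes "B \<ge> 2" "t \<le> 4*B - 6"
  shows "track_col B ((2*B + 1 + t) mod (4*B - 2)) div 2 \<noteq> B - 1"
proof -
  define v where "v = (2*B + 1 + t) mod (4*B - 2)"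
  have "v = 2*B + 1 + t \<or> v = t - (2*B - 3)"
  proof (cases "2*B + 1 + t < 4*B - 2")
    case False
    then have "2*B + 1 + t = (t - (2*B - 3)) + (4*B - 2)" "t - (2*B - 3) < 4*B - 2"
      using assms by arith+
    then show ?thesis
      unfolding v_def by (metis mod_add_self2 mod_less)
  qed (simp add: v_def)
  then have "v \<noteq> 2*B - 2 \<and> v \<noteq> 2*B - 1"
    using assms by arith
  moreover have "v < 4*B - 2"
    using assms by (simp add: v_def)
  ultimately show ?thesis
    using assms track_col_last_bus_iff[of B v] unfolding v_def by simp
qed

lemma tracks_meet_at_gap:
  assumes "B \<ge> 2" "odd u" "u < 4*B - 2" "4 dvd d" "0 < d" "d < 4*B - 2"
  shows "\<exists>t\<le>4*B - 5.
           track_col B ((u + t) mod (4*B - 2)) div 2 = track_col B ((u + d + t) mod (4*B - 2)) div 2"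
proof -
  txt \<open>The mirror partner of the even position \<open>r\<close> is \<open>r + d\<close>, so the pair shares a bus once
    the qubit at \<open>u\<close> reaches \<open>r\<close>. That takes at most \<open>4B-5\<close> steps unless \<open>u = r + 1\<close>,
    and then the pair starts on the odd mirror pair \<open>(r + 1, r + d + 1)\<close>.\<close>
  define r where "r = 2*B - 2 - d div 2"
  have "even r"
    using assms(1,4) unfolding r_def by (auto elim!: dvdE)
  have r_mirror: "r + (r + d) = 4*B - 4"
    using assms unfolding r_def by (auto elim!: dvdE)
  have r_bound: "r < 4*B - 2" "r + d < 4*B - 2"
    using r_mirror assms(1) by linarith+
  show ?thesis
  proof (cases "u = r + 1")
    case True
    then have "u + (u + d) = 4*B - 2" "u + d < 4*B - 2"
      using r_mirror assms(1) by linarith+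
    then show ?thesis
      using assms(2,3) track_col_mirror[of u "u + d" B] by (intro exI[of _ 0]) simp
  next
    case False
    define t where "t = (if u \<le> r then r - u else r + (4*B - 2) - u)"
    have "u \<noteq> r + 2"
      using \<open>even r\<close> assms(2) by auto
    then have "t \<le> 4*B - 5"
      using False assms(1,3) r_mirror unfolding t_def by (cases "u \<le> r"; simp; linarith)
    have "u + t = r \<or> u + t = r + (4*B - 2)"
      unfolding t_def using assms(3) by (cases "u \<le> r"; simp; linarith)
    then have "(u + t) mod (4*B - 2) = r \<and> (u + d + t) mod (4*B - 2) = r + d"
    proof
      assume wrapped: "u + t = r + (4*B - 2)"
      then have "u + d + t = (r + d) + (4*B - 2)"
        by linarith
      then show ?thesis
        using wrapped r_bound by (metis mod_add_self2 mod_less)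
    qed (use r_bound in simp)
    then show ?thesis
      using \<open>t \<le> 4*B - 5\<close> \<open>even r\<close> r_mirror track_col_mirror[of r "r + d" B] by auto
  qed
qed

lemma tracks_meet:
  assumes "B \<ge> 2" "odd u" "odd u'" "u < 4*B - 2" "u' < 4*B - 2" "u \<noteq> u'"
  shows "\<exists>t\<le>4*B - 5.
           track_col B ((u + t) mod (4*B - 2)) div 2 = track_col B ((u' + t) mod (4*B - 2)) div 2"
proof -
  have ordered: "\<exists>t\<le>4*B - 5.
           track_col B ((u + t) mod (4*B - 2)) div 2 = track_col B ((u' + t) mod (4*B - 2)) div 2"
    if "odd u" "odd u'" "u < u'" "u' < 4*B - 2" for u u'
  proof -
    have "even (u' - u)"
      using that by simp
    then obtain q where q: "u' - u = 2*q"
      by (rule evenE)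
    show ?thesis
    proof (cases "even q")
      case True
      then obtain p where "u' - u = 4*p"
        using q by (metis evenE mult.assoc numeral_Bit0_eq_double)
      then have "4 dvd u' - u" "u + (u' - u) = u'"
        using that(3) by simp_all
      then show ?thesis
        using tracks_meet_at_gap[of B u "u' - u"] assms(1) that by auto
    next
      case False
      txt \<open>Seen from the qubit at \<open>u'\<close>, the gap is \<open>4B-2 - (u' - u)\<close>, a multiple of 4.\<close>
      then obtain p where p: "q = 2*p + 1"
        by (rule oddE)
      define d where "d = 4*B - 2 - (u' - u)"
      have "d = 4*(B - 1 - p)" "0 < d" "d < 4*B - 2"
        using q p that(3,4) unfolding d_def by linarith+
      then have "4 dvd d"
        by simp
      have shift: "(u' + d + t) mod (4*B - 2) = (u + t) mod (4*B - 2)" for t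
      proof -
        have "u' + d + t = (u + t) + (4*B - 2)"
          using that(3,4) unfolding d_def by linarith
        then show ?thesis
          by (simp only: mod_add_self2)
      qed
      show ?thesis
        using tracks_meet_at_gap[of B u' d] shift assms(1) that \<open>4 dvd d\<close> \<open>0 < d\<close> \<open>d < 4*B - 2\<close>
        by (metis (no_types))
    qed
  qed
  show ?thesis
  proof (cases "u < u'")
    case True
    then show ?thesis
      using ordered assms by blast
  next
    case False
    then show ?thesis
      using ordered[of u' u] assms by (metis linorder_neqE_nat)
  qed
qed

lemma columns_meet:
  assumes "B \<ge> 2" "c < 2*B" "c' < 2*B" "c \<noteq> c'"
  shows "\<exists>t\<le>4*B - 5. column_at B c t div 2 = column_at B c' t div 2"
proof -
  have last_bus: "column_at B (2*B - 1) t div 2 = B - 1" for t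
    by (simp add: column_at_def)
  have reaches_last_bus: "\<exists>t\<le>4*B - 5. column_at B c t div 2 = B - 1" if "c < 2*B - 1" for c
    using that track_reaches_last_bus[OF assms(1)] track_start_odd[OF that]
    by (simp add: column_at_def)
  consider "c < 2*B - 1" "c' < 2*B - 1" | "c = 2*B - 1" "c' < 2*B - 1" | "c < 2*B - 1" "c' = 2*B - 1"
    using assms by linarith
  then show ?thesis
  proof cases
    case 1
    then have "track_start B c \<noteq> track_start B c'"
      using assms(4) track_start_inj by blast
    then show ?thesis
      using 1 tracks_meet[OF assms(1)] track_start_odd by (simp add: column_at_def)
  qed (metis reaches_last_bus last_bus)+
qed

lemma column_avoids_last_bus:
  assumes "B \<ge> 2" "t \<le> 4*B - 6"
  shows "column_at B (2*B - 4) t div 2 \<noteq> column_at B (2*B - 1) t div 2"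
proof -
  have "track_start B (2*B - 4) = 2*B + 1"
    using assms(1) by (simp add: track_start_def)
  moreover have "2*B - 4 < 2*B - 1" "(2*B - 1) div 2 = B - 1"
    using assms(1) by arith+
  ultimately show ?thesis
    using assms track_avoids_last_bus by (simp add: column_at_def)
qed

lemma full_connectivity_iff_columns_meet:
  "full_connectivity B s L \<longleftrightarrow>
     (\<forall>c k c' k'. (c, k) \<in> positions B s \<longrightarrow> (c', k') \<in> positions B s \<longrightarrow> (c, k) \<noteq> (c', k') \<longrightarrow>
        (\<exists>t\<le>L. column_at B c t div 2 = column_at B c' t div 2))"
  unfolding full_connectivity_def Ball_def split_paired_All
  by (simp add: share_bus_at_iff_column_at)

lemma full_connectivity_4B_minus_5:
  assumes "B \<ge> 2"
  shows "full_connectivity B s (4*B - 5)"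
  unfolding full_connectivity_iff_columns_meet
proof (intro allI impI)
  fix c k c' k'
  assume "(c, k) \<in> positions B s" "(c', k') \<in> positions B s" "(c, k) \<noteq> (c', k')"
  then show "\<exists>t\<le>4*B - 5. column_at B c t div 2 = column_at B c' t div 2"
    using columns_meet[OF assms, of c c'] by (cases "c = c'") (auto simp: positions_def)
qed

lemma not_full_connectivity_below_4B_minus_5:
  assumes "B \<ge> 2" "s \<ge> 2" "L < 4*B - 5"
  shows "\<not> full_connectivity B s L"
proof -
  have "(2*B - 4, 0) \<in> positions B s" "(2*B - 1, 0) \<in> positions B s" "(2*B - 4, 0::nat) \<noteq> (2*B - 1, 0)"
    using assms by (auto simp: positions_def)
  moreover have "\<not> (\<exists>t\<le>L. column_at B (2*B - 4) t div 2 = column_at B (2*B - 1) t div 2)"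
    using assms column_avoids_last_bus by auto
  ultimately show ?thesis
    unfolding full_connectivity_iff_columns_meet by blast
qed

lemma full_connectivity_single_bus: "full_connectivity 1 s 0"
  unfolding full_connectivity_def share_bus_at_def
proof (intro ballI impI)
  fix q1 q2
  assume "q1 \<in> positions 1 s" "q2 \<in> positions 1 s"
  then show "\<exists>t\<le>0. \<exists>p1\<in>positions 1 s. \<exists>p2\<in>positions 1 s.
               placement 1 t p1 = q1 \<and> placement 1 t p2 = q2 \<and> bus_of p1 = bus_of p2"
    by (auto simp: positions_def bus_of_def)
qed

theorem theorem3:
  fixes B s :: nat
  assumes "B \<ge> 1" and "s \<ge> 2" and "even s"
  shows "(LEAST L. full_connectivity B s L)
           = nat ((4 * int B - 5) * \<lceil>real B / real (B + 1)\<rceil>)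
         \<and> full_connectivity B s (nat ((4 * int B - 5) * \<lceil>real B / real (B + 1)\<rceil>))"
proof -
  define n where "n = (if B = 1 then 0 else 4*B - 5)"
  have "\<lceil>real B / real (B + 1)\<rceil> = 1"
    using assms(1) by (intro ceiling_unique) (auto simp: field_simps)
  then have depth: "nat ((4 * int B - 5) * \<lceil>real B / real (B + 1)\<rceil>) = n"
    unfolding n_def using assms(1) by (cases "B = 1") (simp_all add: nat_diff_distrib)
  have full: "full_connectivity B s n"
    unfolding n_def using assms(1) full_connectivity_single_bus full_connectivity_4B_minus_5
    by (cases "B = 1") simp_all
  have "n \<le> L" if "full_connectivity B s L" for L
    unfolding n_def using that assms(1,2) not_full_connectivity_below_4B_minus_5[of B s L]
    by (cases "B = 1") (auto intro: leI)
  then have "(LEAST L. full_connectivity B s L) = n"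
    using full by (intro Least_equality)
  then show ?thesis
    using full depth by simp
qed

end
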